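(* Let $L$ be a finite-dimensional Lie superalgebra, let $(K,\lambda)\in C(L)$, let $M$ be any Lie superalgebra and $\sigma\in\mathrm{Hom}(M,L)$ surjective. If $\tau\in\mathrm{Hom}(M,K)$ satisfies $\lambda\circ\tau=\sigma$, then $\tau$ is surjective.
   Context: Lie superalgebras over a field of characteristic $\neq 2,3$; $\mathrm{Hom}(A,B)$ denotes Lie superalgebra homomorphisms (even, bracket-preserving). $Z(K)$ is the center, $K'=[K,K]$. $C(L)$ is the class of pairs $(K,\lambda)$, $K$ a Lie superalgebra, $\lambda\in\mathrm{Hom}(K,L)$ surjective with $\mathrm{Ker}(\lambda)\subseteq K'\cap Z(K)$. *)

theory Defs
  imports Complex_Main
begin

text \<open>A Lie superalgebra over a field 'k, whose underlying vector space is the whole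
  type 'v (with scalar multiplication scl), graded as V = ev + od (direct sum),
  with a bracket br.\<close>

record ('k, 'v) lsa =
  scl :: "'k \<Rightarrow> 'v \<Rightarrow> 'v"
  ev  :: "'v set"
  od  :: "'v set"
  br  :: "'v \<Rightarrow> 'v \<Rightarrow> 'v"

definition homog :: "('k, 'v) lsa \<Rightarrow> 'v \<Rightarrow> bool" where
  "homog A x \<longleftrightarrow> x \<in> ev A \<or> x \<in> od A"

text \<open>the sign (-1)^(|x||y|) for homogeneous x, y (the value at 0 is irrelevant)\<close>
definition psign :: "('k::field, 'v) lsa \<Rightarrow> 'v \<Rightarrow> 'v \<Rightarrow> 'k" where
  "psign A x y = (if x \<in> od A \<and> y \<in> od A then -1 else 1)"

definition lie_superalgebra :: "('k::field, 'v::ab_group_add) lsa \<Rightarrow> bool" where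
  "lie_superalgebra A \<longleftrightarrow>
     vector_space (scl A) \<and>
     module.subspace (scl A) (ev A) \<and> module.subspace (scl A) (od A) \<and>
     ev A \<inter> od A = {0} \<and>
     (\<forall>v. \<exists>a b. a \<in> ev A \<and> b \<in> od A \<and> v = a + b) \<and>
     (\<forall>x. Vector_Spaces.linear (scl A) (scl A) (br A x)) \<and>
     (\<forall>y. Vector_Spaces.linear (scl A) (scl A) (\<lambda>x. br A x y)) \<and>
     (\<forall>x\<in>ev A. \<forall>y\<in>ev A. br A x y \<in> ev A) \<and>
     (\<forall>x\<in>ev A. \<forall>y\<in>od A. br A x y \<in> od A) \<and>
     (\<forall>x\<in>od A. \<forall>y\<in>ev A. br A x y \<in> od A) \<and>
     (\<forall>x\<in>od A. \<forall>y\<in>od A. br A x y \<in> ev A) \<and>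
     (\<forall>x y. homog A x \<longrightarrow> homog A y \<longrightarrow>
        br A x y = - scl A (psign A x y) (br A y x)) \<and>
     (\<forall>x y z. homog A x \<longrightarrow> homog A y \<longrightarrow> homog A z \<longrightarrow>
        br A x (br A y z) = br A (br A x y) z + scl A (psign A x y) (br A y (br A x z)))"

definition fin_dim_lsa :: "('k::field, 'v::ab_group_add) lsa \<Rightarrow> bool" where
  "fin_dim_lsa A \<longleftrightarrow> (\<exists>B. finite B \<and> module.span (scl A) B = UNIV)"

definition lsa_hom :: "('k::field, 'a::ab_group_add) lsa \<Rightarrow> ('k, 'b::ab_group_add) lsa
    \<Rightarrow> ('a \<Rightarrow> 'b) set" where
  "lsa_hom A B = {f. Vector_Spaces.linear (scl A) (scl B) f \<and>
      f ` ev A \<subseteq> ev B \<and> f ` od A \<subseteq> od B \<and>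
      (\<forall>x y. f (br A x y) = br B (f x) (f y))}"

definition center :: "('k, 'v::zero) lsa \<Rightarrow> 'v set" where
  "center A = {z. \<forall>x. br A z x = 0 \<and> br A x z = 0}"

definition derived :: "('k::field, 'v::ab_group_add) lsa \<Rightarrow> 'v set" where
  "derived A = module.span (scl A) {br A x y | x y. True}"

definition class_C :: "('k::field, 'l::ab_group_add) lsa \<Rightarrow> ('k, 'a::ab_group_add) lsa
    \<Rightarrow> ('a \<Rightarrow> 'l) \<Rightarrow> bool" where
  "class_C L K lam \<longleftrightarrow> lie_superalgebra K \<and> lam \<in> lsa_hom K L \<and> surj lam \<and>
     {x. lam x = 0} \<subseteq> derived K \<inter> center K"

end

theory Submission
  imports Defs
begin

text \<open>Since \<open>\<lambda> \<circ> \<tau> = \<sigma>\<close> is onto, \<open>K = \<tau>(M) + Ker \<lambda>\<close> with \<open>Ker \<lambda>\<close> central. Central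
  summands drop out of brackets, so every \<open>[x, y]\<close> in \<open>K\<close> is some \<open>[\<tau> a, \<tau> b] = \<tau> [a, b]\<close>;
  hence \<open>K' \<subseteq> \<tau>(M)\<close>, and as \<open>Ker \<lambda> \<subseteq> K'\<close> also \<open>K = \<tau>(M)\<close>.\<close>

lemma lie_superalgebra_br_add_left:
  assumes "lie_superalgebra A"
  shows "br A (x + y) z = br A x z + br A y z"
proof -
  have "Vector_Spaces.linear (scl A) (scl A) (\<lambda>w. br A w z)"
    using assms unfolding lie_superalgebra_def by blast
  then show ?thesis by (simp add: Vector_Spaces.linear_iff)
qed

lemma lie_superalgebra_br_add_right:
  assumes "lie_superalgebra A"
  shows "br A x (y + z) = br A x y + br A x z"
proof -
  have "Vector_Spaces.linear (scl A) (scl A) (br A x)"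
    using assms unfolding lie_superalgebra_def by blast
  then show ?thesis by (simp add: Vector_Spaces.linear_iff)
qed

lemma lsa_hom_module_hom:
  assumes "f \<in> lsa_hom A B"
  shows "module_hom (scl A) (scl B) f"
  using assms by (simp add: lsa_hom_def module_hom_iff_linear)

lemma lsa_hom_br:
  assumes "f \<in> lsa_hom A B"
  shows "f (br A x y) = br B (f x) (f y)"
  using assms by (simp add: lsa_hom_def)

lemma subspace_range_lsa_hom:
  assumes "f \<in> lsa_hom A B"
  shows "module.subspace (scl B) (range f)"
proof -
  interpret module_hom "scl A" "scl B" f
    using assms by (rule lsa_hom_module_hom)
  show ?thesis by (rule subspace_image[OF m1.subspace_UNIV])
qed

lemma br_in_range_if_range_plus_center:
  assumes K: "lie_superalgebra K" and tau: "tau \<in> lsa_hom M K"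
    and supplement: "\<And>k. \<exists>m. k - tau m \<in> center K"
  shows "br K x y \<in> range tau"
proof -
  obtain a b where a: "x - tau a \<in> center K" and b: "y - tau b \<in> center K"
    using supplement by blast
  define z1 z2 where "z1 = x - tau a" and "z2 = y - tau b"
  have "br K x y = br K (tau a + z1) (tau b + z2)"
    by (simp add: z1_def z2_def)
  also have "\<dots> = br K (tau a) (tau b) + br K (tau a) z2 + (br K z1 (tau b) + br K z1 z2)"
    by (simp add: lie_superalgebra_br_add_left[OF K] lie_superalgebra_br_add_right[OF K])
  also have "\<dots> = tau (br M a b)"
    using a b by (simp add: z1_def z2_def center_def lsa_hom_br[OF tau])
  finally show ?thesis by simp
qed

lemma derived_subset_range_if_range_plus_center:
  assumes K: "lie_superalgebra K" and tau: "tau \<in> lsa_hom M K"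
    and supplement: "\<And>k. \<exists>m. k - tau m \<in> center K"
  shows "derived K \<subseteq> range tau"
proof -
  interpret module_hom "scl M" "scl K" tau
    using tau by (rule lsa_hom_module_hom)
  show ?thesis
    unfolding derived_def
    using br_in_range_if_range_plus_center[OF K tau supplement]
    by (intro m2.span_minimal subspace_range_lsa_hom[OF tau]) blast
qed

lemma surj_if_range_plus_center_inter_derived:
  assumes K: "lie_superalgebra K" and tau: "tau \<in> lsa_hom M K"
    and supplement: "\<And>k. \<exists>m. k - tau m \<in> center K \<inter> derived K"
  shows "surj tau"
proof -
  interpret module_hom "scl M" "scl K" tau
    using tau by (rule lsa_hom_module_hom)
  have derived: "derived K \<subseteq> range tau"
    using supplement by (intro derived_subset_range_if_range_plus_center[OF K tau]) blast
  have "k \<in> range tau" for k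
  proof -
    obtain m where "k - tau m \<in> derived K"
      using supplement by blast
    with derived obtain m' where "k - tau m = tau m'"
      by blast
    then have "k = tau (m + m')"
      by (simp add: add algebra_simps)
    then show ?thesis by simp
  qed
  then show ?thesis by blast
qed

lemma class_C_range_plus_kernel:
  assumes "class_C L K lam" and "surj (lam \<circ> tau)"
  shows "\<exists>m. k - tau m \<in> center K \<inter> derived K"
proof -
  interpret module_hom "scl K" "scl L" lam
    using assms(1) unfolding class_C_def by (blast intro: lsa_hom_module_hom)
  obtain m where "lam (tau m) = lam k"
    using assms(2) by (metis comp_apply surjD)
  then have "lam (k - tau m) = 0"
    by (simp add: diff)
  then show ?thesis
    using assms(1) unfolding class_C_def by blast
qed

theorem lemma4p2:
  fixes L :: "('k::field, 'l::ab_group_add) lsa"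
    and K :: "('k, 'a::ab_group_add) lsa"
    and M :: "('k, 'm::ab_group_add) lsa"
  assumes "(2::'k) \<noteq> 0" and "(3::'k) \<noteq> 0"
    and "lie_superalgebra L" and "fin_dim_lsa L"
    and "class_C L K lam"
    and "lie_superalgebra M"
    and "sigma \<in> lsa_hom M L" and "surj sigma"
    and "tau \<in> lsa_hom M K" and "lam \<circ> tau = sigma"
  shows "surj tau"
proof (rule surj_if_range_plus_center_inter_derived)
  show "lie_superalgebra K"
    using \<open>class_C L K lam\<close> by (simp add: class_C_def)
  show "tau \<in> lsa_hom M K" by fact
  show "\<exists>m. k - tau m \<in> center K \<inter> derived K" for k
    using \<open>class_C L K lam\<close> \<open>surj sigma\<close> \<open>lam \<circ> tau = sigma\<close>
    by (blast intro: class_C_range_plus_kernel)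
qed

end
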